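(* Let $\mathcal{H}$ be a finite-dimensional complex Hilbert space and $A,B$ linear operators on $\mathcal{H}$. Let $0<p,q<1$ with $p+q=1$ and $\mathcal{L}=qA+pB$. Suppose (i) $\|A\|\le1$ and $\|B\|\le1$ (operator norms); (ii) $1$ is an eigenvalue of $A$ and of $B$, and there is a nonzero $\rho_1\in\mathcal{H}$ with $A^*\rho_1=\rho_1$ and $B^*\rho_1=\rho_1$. Then: (a) if $\mathcal{L}\rho=\lambda\rho$ for some nonzero $\rho$ and $|\lambda|=1$, then $A\rho=\lambda\rho$ and $B\rho=\lambda\rho$; (b) if $1$ is an eigenvalue of $B$ of algebraic multiplicity $1$, then $1$ is an eigenvalue of $\mathcal{L}$ of algebraic multiplicity $1$. *)

theory Defs
  imports "HOL-Analysis.Analysis" "HOL-Computational_Algebra.Polynomial"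
begin

text \<open>A finite-dimensional complex Hilbert space is modelled as complex^'n with its
standard (Euclidean) inner product; linear operators are matrices complex^'n^'n
acting by matrix-vector multiplication.\<close>

definition op_norm :: "complex^'n^'n \<Rightarrow> real" where
  "op_norm A = onorm (\<lambda>x. A *v x)"

definition adjoint_mat :: "complex^'n^'n \<Rightarrow> complex^'n^'n" where
  "adjoint_mat A = (\<chi> i j. cnj (A $ j $ i))"

definition is_eigenvalue :: "complex^'n^'n \<Rightarrow> complex \<Rightarrow> bool" where
  "is_eigenvalue A c \<longleftrightarrow> (\<exists>v. v \<noteq> 0 \<and> A *v v = c *s v)"

definition charpoly :: "complex^'n^'n \<Rightarrow> complex poly" where
  "charpoly A = det (\<chi> i j. (if i = j then [:0, 1:] else 0) - [:A $ i $ j:])"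

definition alg_mult :: "complex^'n^'n \<Rightarrow> complex \<Rightarrow> nat" where
  "alg_mult A c = order c (charpoly A)"

end

theory Submission
  imports Defs
begin

text \<open>
  (a) The norm of an inner product space is strictly convex: if \<open>\<parallel>A\<rho>\<parallel> \<le> \<parallel>\<rho>\<parallel>\<close>,
  \<open>\<parallel>B\<rho>\<parallel> \<le> \<parallel>\<rho>\<parallel>\<close> and \<open>\<parallel>q A\<rho> + p B\<rho>\<parallel> = \<parallel>\<rho>\<parallel>\<close>, then \<open>A\<rho> = B\<rho>\<close>,
  so both equal \<open>\<lambda>\<rho>\<close>.

  (b) A contraction \<open>T\<close> with \<open>T\<^sup>* \<rho>\<^sub>1 = \<rho>\<^sub>1\<close> also fixes \<open>\<rho>\<^sub>1\<close>, and \<open>\<rho>\<^sub>1\<close> is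
  orthogonal to the range of \<open>I - T\<close>. By (a) every fixed vector of \<open>L\<close> is fixed by \<open>B\<close>,
  and the fixed space of \<open>B\<close> is the line through \<open>\<rho>\<^sub>1\<close> because geometric multiplicity
  is bounded by algebraic multiplicity. So the fixed space of \<open>L\<close> is spanned by a vector
  outside the range of \<open>I - L\<close>, which rules out a Jordan block of size at least 2.
  Both multiplicity statements come from one factorisation: if the columns \<open>J\<close> of an
  invertible \<open>R\<close> are eigenvectors for \<open>c\<close>, then \<open>(X - c)\<^bsup>|J|\<^esup>\<close> can be pulled out of
  those columns of \<open>(X I - T) R\<close>.
\<close>

lemma norm_vector_smult: "norm (c *s (x::complex^'n)) = cmod c * norm x"
  unfolding norm_vec_def by (simp add: norm_mult L2_set_right_distrib)

lemma scaleR_matrix_vector_mult: "((r::real) *\<^sub>R (A::complex^'n^'m)) *v x = r *\<^sub>R (A *v x)"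
  by (simp add: vec_eq_iff matrix_vector_mult_def scaleR_sum_right mult_ac)

lemma matrix_vector_mult_mat: "mat c *v x = c *s (x::'a::semiring_1^'n)"
  by (simp add: vec_eq_iff matrix_vector_mult_def mat_def if_distrib[of "\<lambda>a. a * _"] cong: if_cong)

lemma det_nonzero_iff_kernel_trivial:
  "det (A::'a::field^'n^'n) \<noteq> 0 \<longleftrightarrow> (\<forall>x. A *v x = 0 \<longrightarrow> x = 0)"
  using det_nz_iff_inj_gen[OF matrix_vector_mul_linear_gen, of A] vec.inj_on_iff_eq_0[of UNIV A]
  by simp

lemma matrix_matrix_mult_column: "(A ** R) $ i $ k = (A *v column k R) $ i"
  by (simp add: matrix_matrix_mult_def matrix_vector_mult_def column_def)

lemma matrix_vector_mult_axis: "(R::'a::semiring_1^'n^'m) *v axis k 1 = column k R"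
  by (simp add: vec_eq_iff matrix_vector_mult_def column_def axis_def
      if_distrib[of "\<lambda>a. _ * a"] cong: if_cong)

lemma inner_matrix_vector_adjoint: "inner (A *v x) y = inner x (adjoint_mat A *v y)"
proof -
  have inner_complex: "inner u w = Re (u * cnj w)" for u w :: complex
    by (simp add: inner_complex_def)
  have "inner (A *v x) y = Re (\<Sum>i\<in>UNIV. \<Sum>j\<in>UNIV. A$i$j * x$j * cnj (y$i))"
    by (simp add: inner_vec_def inner_complex matrix_vector_mult_def sum_distrib_right)
  also have "\<dots> = Re (\<Sum>j\<in>UNIV. \<Sum>i\<in>UNIV. x$j * cnj (cnj (A$i$j) * y$i))"
    by (subst sum.swap) (simp add: mult_ac)
  also have "\<dots> = inner x (adjoint_mat A *v y)"
    by (simp add: inner_vec_def inner_complex matrix_vector_mult_def adjoint_mat_def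
        sum_distrib_left)
  finally show ?thesis .
qed

lemma adjoint_mat_scaleR_add:
  "adjoint_mat (a *\<^sub>R A + b *\<^sub>R B) = a *\<^sub>R adjoint_mat A + b *\<^sub>R adjoint_mat B"
  by (simp add: adjoint_mat_def vec_eq_iff)

lemma norm_matrix_vector_le_op_norm: "norm (A *v x) \<le> op_norm A * norm x"
  unfolding op_norm_def by (rule onorm) simp

lemma op_norm_le_1_imp_contraction:
  assumes "op_norm A \<le> 1"
  shows "norm (A *v x) \<le> norm x"
  using norm_matrix_vector_le_op_norm[of A x] mult_right_mono[OF assms norm_ge_zero[of x]]
  by simp

lemma norm_convex_combination_eq_imp_eq:
  fixes x y :: "'a::real_inner"
  assumes "0 < p" "0 < q" "p + q = 1"
    and "norm x \<le> r" "norm y \<le> r" "norm (q *\<^sub>R x + p *\<^sub>R y) = r"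
  shows "x = y"
proof -
  have p: "p = 1 - q" using assms(3) by simp
  have "r\<^sup>2 = q * (norm x)\<^sup>2 + p * (norm y)\<^sup>2 - p * q * (norm (x - y))\<^sup>2"
    unfolding assms(6)[symmetric] power2_norm_eq_inner p
    by (simp add: inner_commute[of y x] algebra_simps)
  also have "\<dots> \<le> q * r\<^sup>2 + p * r\<^sup>2 - p * q * (norm (x - y))\<^sup>2"
    using assms(1,2,4,5) by (intro diff_right_mono add_mono mult_left_mono power_mono) auto
  also have "\<dots> = r\<^sup>2 - p * q * (norm (x - y))\<^sup>2"
    using assms(3) by (simp add: algebra_simps flip: distrib_right)
  finally have "p * q * (norm (x - y))\<^sup>2 \<le> 0" by simp
  with assms(1,2) show ?thesis
    by (simp add: mult_le_0_iff zero_less_mult_iff)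
qed

lemma contraction_convex_combination:
  fixes A B :: "complex^'n^'n"
  assumes "0 \<le> p" "0 \<le> q" "p + q = 1"
    and "\<And>x. norm (A *v x) \<le> norm x" "\<And>x. norm (B *v x) \<le> norm x"
  shows "norm ((q *\<^sub>R A + p *\<^sub>R B) *v x) \<le> norm x"
proof -
  have "norm ((q *\<^sub>R A + p *\<^sub>R B) *v x) \<le> q * norm (A *v x) + p * norm (B *v x)"
    using norm_triangle_ineq[of "q *\<^sub>R (A *v x)" "p *\<^sub>R (B *v x)"] assms(1,2)
    by (simp add: matrix_vector_mult_add_rdistrib scaleR_matrix_vector_mult)
  also have "\<dots> \<le> q * norm x + p * norm x"
    using assms by (intro add_mono mult_left_mono) auto
  also have "\<dots> = norm x"
    using assms(3) by (metis add.commute distrib_right mult_1)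
  finally show ?thesis .
qed

lemma contraction_convex_combination_unimodular_eigenvector:
  fixes A B :: "complex^'n^'n"
  assumes "0 < p" "0 < q" "p + q = 1"
    and "\<And>x. norm (A *v x) \<le> norm x" "\<And>x. norm (B *v x) \<le> norm x"
    and eigen: "(q *\<^sub>R A + p *\<^sub>R B) *v v = l *s v" and "cmod l = 1"
  shows "A *v v = l *s v \<and> B *v v = l *s v"
proof -
  have combination: "q *\<^sub>R (A *v v) + p *\<^sub>R (B *v v) = l *s v"
    using eigen by (simp add: matrix_vector_mult_add_rdistrib scaleR_matrix_vector_mult)
  have "norm (l *s v) = norm v"
    using \<open>cmod l = 1\<close> by (simp add: norm_vector_smult)
  then have "A *v v = B *v v"
    using norm_convex_combination_eq_imp_eq[OF assms(1-3) assms(4) assms(5)] combination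
    by simp
  with combination \<open>p + q = 1\<close> show ?thesis
    by (simp add: add.commute[of q] flip: scaleR_add_left)
qed

lemma adjoint_fixed_orthogonal_range:
  assumes "adjoint_mat T *v v = v"
  shows "inner (y - T *v y) v = 0"
  using inner_matrix_vector_adjoint[of T y v] assms by (simp add: inner_diff_left)

lemma contraction_fixed_if_adjoint_fixed:
  fixes T :: "complex^'n^'n"
  assumes "\<And>x. norm (T *v x) \<le> norm x" and "adjoint_mat T *v v = v"
  shows "T *v v = v"
proof -
  have fixed_inner: "inner (T *v v) v = inner v v"
    using inner_matrix_vector_adjoint[of T v v] assms(2) by simp
  have "(norm (T *v v - v))\<^sup>2 = (norm (T *v v))\<^sup>2 - 2 * inner (T *v v) v + (norm v)\<^sup>2"
    unfolding power2_norm_eq_inner inner_diff_left inner_diff_right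
    using inner_commute[of v "T *v v"] by linarith
  also have "\<dots> = (norm (T *v v))\<^sup>2 - (norm v)\<^sup>2"
    using fixed_inner by (simp add: power2_norm_eq_inner)
  also have "\<dots> \<le> 0"
    using assms(1)[of v] by (simp add: power_mono)
  finally show ?thesis by simp
qed

lemma poly_det: "poly (det X) t = det (\<chi> i j. poly (X $ i $ j) t)"
  unfolding det_def by (simp add: poly_sum poly_prod)

lemma poly_charpoly: "poly (charpoly T) t = det (mat t - T)"
  unfolding charpoly_def poly_det by (rule arg_cong[where f = det]) (simp add: vec_eq_iff mat_def)

lemma charpoly_nonzero: "charpoly T \<noteq> 0"
proof
  define t where "t = op_norm T + 1"
  assume "charpoly T = 0"
  have "0 \<le> op_norm T"
    unfolding op_norm_def by (rule onorm_pos_le) simp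
  have "det (mat (complex_of_real t) - T) = 0"
    using \<open>charpoly T = 0\<close> poly_charpoly[of T t] by simp
  then obtain x where "x \<noteq> 0" and "(mat (complex_of_real t) - T) *v x = 0"
    using det_nonzero_iff_kernel_trivial by blast
  then have "T *v x = complex_of_real t *s x"
    by (simp add: matrix_vector_mult_diff_rdistrib matrix_vector_mult_mat)
  then have "t * norm x \<le> op_norm T * norm x"
    using norm_matrix_vector_le_op_norm[of T x] \<open>0 \<le> op_norm T\<close>
    by (simp add: norm_vector_smult t_def del: of_real_add)
  then show False
    using \<open>x \<noteq> 0\<close> by (simp add: t_def)
qed

lemma det_scale_columns:
  "det (\<chi> i j. if j \<in> J then c * a i j else a i j :: 'a::comm_ring_1^'n^'n)
     = c ^ card J * det (\<chi> i j. a i j :: 'a^'n^'n)"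
proof -
  have "(\<Prod>i\<in>UNIV. if p i \<in> J then c * a i (p i) else a i (p i))
      = c ^ card J * (\<Prod>i\<in>UNIV. a i (p i))" if "p permutes UNIV" for p
  proof -
    have "(\<Prod>i\<in>UNIV. if p i \<in> J then c * a i (p i) else a i (p i))
        = (\<Prod>i\<in>UNIV. (if p i \<in> J then c else 1) * a i (p i))"
      by (intro prod.cong) auto
    also have "\<dots> = (\<Prod>i\<in>UNIV. if p i \<in> J then c else 1) * (\<Prod>i\<in>UNIV. a i (p i))"
      by (rule prod.distrib)
    also have "(\<Prod>i\<in>UNIV. if p i \<in> J then c else 1) = (\<Prod>j\<in>UNIV. if j \<in> J then c else 1)"
      using prod.permute[OF that, of "\<lambda>j. if j \<in> J then c else 1"] by (simp add: comp_def)
    also have "\<dots> = c ^ card J"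
      by (simp add: prod.If_cases Int_def)
    finally show ?thesis .
  qed
  then show ?thesis
    unfolding det_def by (auto simp: sum_distrib_left mult_ac intro: sum.cong)
qed

lemma independent_imp_invertible_columns:
  fixes S :: "('a::field^'n) set"
  assumes "vec.independent S"
  obtains R :: "'a^'n^'n" where "det R \<noteq> 0" and "S \<subseteq> range (\<lambda>j. column j R)"
proof -
  define E where "E = vec.extend_basis S"
  have E: "vec.independent E" "S \<subseteq> E" "vec.span E = UNIV"
    using vec.independent_extend_basis[OF assms] vec.extend_basis_superset[OF assms]
      vec.span_extend_basis[OF assms] unfolding E_def by auto
  have "finite E"
    using vec.finiteI_independent[OF E(1)] .
  have "card E = vec.dim (UNIV :: ('a^'n) set)"
    using vec.basis_card_eq_dim[of E UNIV] E by auto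
  then obtain g where g: "bij_betw g (UNIV :: 'n set) E"
    using finite_same_card_bij[OF _ \<open>finite E\<close>] by (metis finite vec_dim_card)
  define R :: "'a^'n^'n" where "R = (\<chi> i j. g j $ i)"
  have column_R: "column j R = g j" for j
    by (simp add: R_def column_def vec_eq_iff)
  have "x = 0" if "R *v x = 0" for x
  proof -
    have "(\<Sum>v\<in>E. x $ inv_into UNIV g v *s v) = (\<Sum>j\<in>UNIV. x $ j *s g j)"
      using sum.reindex_bij_betw[OF g, of "\<lambda>v. x $ inv_into UNIV g v *s v"] g
      by (simp add: bij_betw_inv_into_left)
    also have "\<dots> = 0"
      using that by (simp add: matrix_mult_sum column_R)
    finally have "\<forall>v\<in>E. x $ inv_into UNIV g v = 0"
      using E(1) \<open>finite E\<close> by (auto simp: vec.independent_explicit)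
    then show "x = 0"
      using g by (simp add: vec_eq_iff) (metis bij_betwE bij_betw_inv_into_left UNIV_I)
  qed
  then have "det R \<noteq> 0"
    by (simp add: det_nonzero_iff_kernel_trivial)
  moreover have "S \<subseteq> range (\<lambda>j. column j R)"
    using E(2) g by (auto simp: column_R bij_betw_def)
  ultimately show ?thesis ..
qed

lemma charpoly_factor_eigencolumns:
  fixes T R :: "complex^'n^'n"
  assumes eigen: "\<And>j. j \<in> J \<Longrightarrow> T *v column j R = c *s column j R"
  obtains Y :: "complex poly^'n^'n"
  where "charpoly T * [:det R:] = [:-c, 1:] ^ card J * det Y"
    and "poly (det Y) c = det (\<chi> i j. if j \<in> J then R $ i $ j else ((mat c - T) ** R) $ i $ j)"
proof -
  define K :: "complex poly^'n^'n" where "K = (\<chi> i j. [:R $ i $ j:])"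
  define C :: "complex poly^'n^'n" where "C = mat [:0, 1:] - (\<chi> i j. [:T $ i $ j:])"
  define Y where "Y = (\<chi> i j. if j \<in> J then K $ i $ j else (C ** K) $ i $ j)"
  have poly_K: "poly (K $ i $ j) t = R $ i $ j" for i j t
    by (simp add: K_def)
  have poly_CK: "poly ((C ** K) $ i $ j) t = ((mat t - T) ** R) $ i $ j" for i j t
    by (simp add: C_def K_def matrix_matrix_mult_def poly_sum mat_def if_distrib[of "\<lambda>p. poly p t"]
        left_diff_distrib right_diff_distrib sum_subtractf mult.commute cong: if_cong)
  have "(C ** K) $ i $ j = [:-c, 1:] * K $ i $ j" if "j \<in> J" for i j
  proof (rule poly_ext)
    fix t
    have "((mat t - T) ** R) $ i $ j = (t *s column j R - c *s column j R) $ i"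
      using eigen[OF that]
      by (simp add: matrix_matrix_mult_column matrix_vector_mult_diff_rdistrib matrix_vector_mult_mat)
    then show "poly ((C ** K) $ i $ j) t = poly ([:-c, 1:] * K $ i $ j) t"
      unfolding poly_CK by (simp add: K_def column_def algebra_simps)
  qed
  then have "C ** K = (\<chi> i j. if j \<in> J then [:-c, 1:] * Y $ i $ j else Y $ i $ j)"
    by (simp add: Y_def vec_eq_iff)
  then have "det (C ** K) = [:-c, 1:] ^ card J * det Y"
    using det_scale_columns[of J "[:-c, 1:]" "\<lambda>i j. Y $ i $ j"] by simp
  moreover have "det C = charpoly T"
    unfolding C_def charpoly_def by (rule arg_cong[where f = det]) (simp add: vec_eq_iff mat_def)
  moreover have "det K = [:det R:]"
    by (rule poly_ext) (simp add: poly_det poly_K)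
  ultimately have "charpoly T * [:det R:] = [:-c, 1:] ^ card J * det Y"
    by (simp add: det_mul)
  moreover have "poly (det Y) c
      = det (\<chi> i j. if j \<in> J then R $ i $ j else ((mat c - T) ** R) $ i $ j)"
    unfolding poly_det Y_def
    by (simp add: poly_CK poly_K if_distrib[of "\<lambda>p. poly p c"] cong: if_cong)
  ultimately show ?thesis ..
qed

lemma card_independent_eigenvectors_le_order:
  fixes T :: "complex^'n^'n"
  assumes "vec.independent S" and eigen: "\<And>v. v \<in> S \<Longrightarrow> T *v v = c *s v"
  shows "card S \<le> order c (charpoly T)"
proof -
  obtain R :: "complex^'n^'n" where "det R \<noteq> 0" and S: "S \<subseteq> range (\<lambda>j. column j R)"
    using independent_imp_invertible_columns[OF assms(1)] .
  define J where "J = {j. column j R \<in> S}"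
  have "card S \<le> card J"
    using S by (intro surj_card_le) (auto simp: J_def)
  have "T *v column j R = c *s column j R" if "j \<in> J" for j
    using eigen that by (simp add: J_def)
  then obtain Y :: "complex poly^'n^'n" where "charpoly T * [:det R:] = [:-c, 1:] ^ card J * det Y"
    using charpoly_factor_eigencolumns by blast
  then have "[:-c, 1:] ^ card J dvd charpoly T * [:det R:]"
    by simp
  then have "[:-c, 1:] ^ card J dvd charpoly T"
    using \<open>det R \<noteq> 0\<close> by (auto dest: dvd_smult_cancel)
  then have "card J \<le> order c (charpoly T)"
    using order_divides charpoly_nonzero by blast
  with \<open>card S \<le> card J\<close> show ?thesis by simp
qed

lemma simple_eigenvalue_eigenvectors_collinear:
  fixes T :: "complex^'n^'n"
  assumes "order c (charpoly T) = 1"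
    and "v \<noteq> 0" "T *v v = c *s v" "T *v u = c *s u"
  shows "\<exists>a. u = a *s v"
proof (rule ccontr)
  assume "\<nexists>a. u = a *s v"
  then have "u \<notin> vec.span {v}" and "u \<noteq> v"
    by (auto simp: vec.span_singleton) (metis vector_smult_lid)
  then have "vec.independent {u, v}"
    using vec.independent_insertI[of u "{v}"] \<open>v \<noteq> 0\<close> by simp
  then have "card {u, v} \<le> order c (charpoly T)"
    using assms(3,4) by (intro card_independent_eigenvectors_le_order) auto
  with \<open>u \<noteq> v\<close> assms(1) show False by simp
qed

lemma det_eigencolumn_border_nonzero:
  fixes T R :: "complex^'n^'n"
  assumes "det R \<noteq> 0" and column: "column k R = v" and eigen: "T *v v = c *s v"
    and eigenspace: "\<And>u. T *v u = c *s u \<Longrightarrow> \<exists>a. u = a *s v"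
    and not_range: "\<And>y. c *s y - T *v y \<noteq> v"
  shows "det (\<chi> i j. if j = k then R $ i $ j else ((mat c - T) ** R) $ i $ j) \<noteq> 0"
    (is "det ?Y \<noteq> 0")
proof -
  have R_injective: "x = 0" if "R *v x = 0" for x
    using \<open>det R \<noteq> 0\<close> that det_nonzero_iff_kernel_trivial by blast
  have column_k: "((mat c - T) ** R) $ i $ k = 0" for i
    using eigen column
    by (simp add: matrix_matrix_mult_column matrix_vector_mult_diff_rdistrib matrix_vector_mult_mat)
  have Y_mult: "?Y *v x = (mat c - T) *v (R *v x) + x $ k *s v" for x
  proof -
    have "(\<Sum>j\<in>UNIV. (if j = k then R $ i $ j else ((mat c - T) ** R) $ i $ j) * x $ j)
        = (\<Sum>j\<in>UNIV. ((mat c - T) ** R) $ i $ j * x $ j + (if j = k then R $ i $ j * x $ j else 0))"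
      for i by (rule sum.cong) (auto simp: column_k)
    then show ?thesis
      unfolding column[symmetric] matrix_vector_mul_assoc
      by (simp add: vec_eq_iff matrix_vector_mult_def sum.distrib column_def mult.commute)
  qed
  have "x = 0" if "?Y *v x = 0" for x
  proof (cases "x $ k = 0")
    case False
    define y where "y = (- 1 / x $ k) *s (R *v x)"
    have "c *s y - T *v y = (mat c - T) *v y"
      by (simp add: matrix_vector_mult_diff_rdistrib matrix_vector_mult_mat)
    also have "\<dots> = (- 1 / x $ k) *s ((mat c - T) *v (R *v x))"
      by (simp only: y_def vec.scale)
    also have "\<dots> = v"
      using that False by (simp add: Y_mult eq_neg_iff_add_eq_0[symmetric] vector_smult_assoc)
    finally show ?thesis
      using not_range by blast
  next
    case True
    with that have "T *v (R *v x) = c *s (R *v x)"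
      by (simp add: Y_mult matrix_vector_mult_diff_rdistrib matrix_vector_mult_mat)
    then obtain a where "R *v x = a *s v"
      using eigenspace by blast
    also have "\<dots> = R *v (a *s axis k 1)"
      by (simp add: vector_scalar_commute matrix_vector_mult_axis column)
    finally have "x = a *s axis k 1"
      using R_injective[of "x - a *s axis k 1"] by (simp add: matrix_vector_mult_diff_distrib)
    with True show ?thesis
      by (simp add: axis_def)
  qed
  then show ?thesis
    by (simp add: det_nonzero_iff_kernel_trivial)
qed

lemma order_charpoly_eq_1I:
  fixes T :: "complex^'n^'n"
  assumes "v \<noteq> 0" and eigen: "T *v v = c *s v"
    and eigenspace: "\<And>u. T *v u = c *s u \<Longrightarrow> \<exists>a. u = a *s v"
    and not_range: "\<And>y. c *s y - T *v y \<noteq> v"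
  shows "order c (charpoly T) = 1"
proof -
  obtain R :: "complex^'n^'n" where "det R \<noteq> 0" and "{v} \<subseteq> range (\<lambda>j. column j R)"
    using independent_imp_invertible_columns[of "{v}"] \<open>v \<noteq> 0\<close> by auto
  then obtain k where column: "column k R = v"
    by auto
  obtain Y :: "complex poly^'n^'n" where factor: "charpoly T * [:det R:] = [:-c, 1:] ^ card {k} * det Y"
    and poly_Y: "poly (det Y) c
      = det (\<chi> i j. if j \<in> {k} then R $ i $ j else ((mat c - T) ** R) $ i $ j)"
    using charpoly_factor_eigencolumns[of "{k}" T R c] column eigen by blast
  have "poly (det Y) c \<noteq> 0"
    using poly_Y det_eigencolumn_border_nonzero[OF \<open>det R \<noteq> 0\<close> column eigen eigenspace not_range]
    by simp
  then have "order c (det Y) = 0"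
    by (rule order_0I)
  moreover have "order c [:-c, 1:] = 1"
    using order_power_n_n[of c 1] by simp
  moreover have "[:-c, 1:] * det Y \<noteq> 0"
    using \<open>poly (det Y) c \<noteq> 0\<close> by (intro no_zero_divisors) auto
  ultimately have "order c ([:-c, 1:] * det Y) = 1"
    by (metis order_mult add.right_neutral)
  moreover have "order c (charpoly T * [:det R:]) = order c (charpoly T)"
    using \<open>det R \<noteq> 0\<close> by (simp add: order_smult)
  ultimately show ?thesis
    using factor by simp
qed

theorem mainTheorem3:
  fixes A B :: "complex^'n^'n" and p q :: real and \<rho>1 :: "complex^'n"
  assumes "0 < p" "p < 1" "0 < q" "q < 1" "p + q = 1"
    and "op_norm A \<le> 1" "op_norm B \<le> 1"
    and "is_eigenvalue A 1" "is_eigenvalue B 1"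
    and "\<rho>1 \<noteq> 0" "adjoint_mat A *v \<rho>1 = \<rho>1" "adjoint_mat B *v \<rho>1 = \<rho>1"
  shows "(\<forall>\<rho> l. \<rho> \<noteq> 0 \<longrightarrow> (q *\<^sub>R A + p *\<^sub>R B) *v \<rho> = l *s \<rho> \<longrightarrow> cmod l = 1 \<longrightarrow>
            A *v \<rho> = l *s \<rho> \<and> B *v \<rho> = l *s \<rho>)
       \<and> (alg_mult B 1 = 1 \<longrightarrow>
            is_eigenvalue (q *\<^sub>R A + p *\<^sub>R B) 1 \<and> alg_mult (q *\<^sub>R A + p *\<^sub>R B) 1 = 1)"
proof -
  define L where "L = q *\<^sub>R A + p *\<^sub>R B"
  have contr_A: "norm (A *v x) \<le> norm x" and contr_B: "norm (B *v x) \<le> norm x" for x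
    using op_norm_le_1_imp_contraction assms(6,7) by blast+
  have contr_L: "norm (L *v x) \<le> norm x" for x
    unfolding L_def using assms(1,3,5) contr_A contr_B by (intro contraction_convex_combination) auto
  have unimodular: "A *v \<rho> = l *s \<rho> \<and> B *v \<rho> = l *s \<rho>" if "L *v \<rho> = l *s \<rho>" "cmod l = 1" for \<rho> l
    using contraction_convex_combination_unimodular_eigenvector[OF assms(1,3,5) contr_A contr_B] that
    unfolding L_def by blast
  have "is_eigenvalue L 1 \<and> order 1 (charpoly L) = 1" if "order 1 (charpoly B) = 1"
  proof -
    have adjoint_L: "adjoint_mat L *v \<rho>1 = \<rho>1"
      using assms(5,11,12) by (simp add: L_def adjoint_mat_scaleR_add matrix_vector_mult_add_rdistrib
          scaleR_matrix_vector_mult add.commute[of q] flip: scaleR_add_left)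
    have "L *v \<rho>1 = 1 *s \<rho>1" and "B *v \<rho>1 = 1 *s \<rho>1"
      using contraction_fixed_if_adjoint_fixed[OF contr_L adjoint_L]
        contraction_fixed_if_adjoint_fixed[OF contr_B assms(12)] by simp_all
    moreover have "\<exists>a. u = a *s \<rho>1" if "L *v u = 1 *s u" for u
      using simple_eigenvalue_eigenvectors_collinear[OF \<open>order 1 (charpoly B) = 1\<close> assms(10)]
        \<open>B *v \<rho>1 = 1 *s \<rho>1\<close> unimodular[OF that] by simp
    moreover have "1 *s y - L *v y \<noteq> \<rho>1" for y
      using adjoint_fixed_orthogonal_range[OF adjoint_L, of y] assms(10) by auto
    ultimately show ?thesis
      using order_charpoly_eq_1I[of \<rho>1 L 1] assms(10) unfolding is_eigenvalue_def by blast
  qed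
  with unimodular show ?thesis
    unfolding L_def alg_mult_def by blast
qed

end
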